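(* Let $V$ and $W$ be groups, $r\in\mathbb N$, and let $f,g\colon\mathbb ZV\to\mathbb ZW$ be $r$-strict additive homomorphisms. Then the additive homomorphism $h\colon\mathbb ZV\to\mathbb ZW$ defined by $h(e_v)=f(e_v)g(e_v)$ ($v\in V$) is $r$-strict.
   Context: $\mathbb ZV$ is the group ring with basis $e_v$, $\Delta(V)$ its augmentation ideal, $\Delta(V)^0=\mathbb ZV$. An additive homomorphism $h\colon\mathbb ZV\to\mathbb ZW$ is $r$-strict if $h(\Delta(V)^s)\subset\Delta(W)^s$ for all $s\in\mathbb N$ with $s\le r$. *)

theory Defs
  imports "HOL-Library.Poly_Mapping"
begin

text \<open>Group ring ZV of a (not necessarily abelian) group V, written additively
  via the class group_add: finitely supported functions V to int with convolution
  product (Poly_Mapping).\<close>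

type_synonym 'v grouping = "'v \<Rightarrow>\<^sub>0 int"

definition basis_elt :: "'v \<Rightarrow> 'v grouping" ("e") where
  "basis_elt v = Poly_Mapping.single v 1"

definition augmentation :: "'v grouping \<Rightarrow> int" where
  "augmentation x = (\<Sum>v\<in>Poly_Mapping.keys x. Poly_Mapping.lookup x v)"

definition aug_ideal :: "'v::group_add grouping set" where
  "aug_ideal = {x. augmentation x = 0}"

text \<open>s-th power of the augmentation ideal: the two-sided ideal generated by all
  products of s elements of Delta(V).  For s = 0 the empty product is 1,
  so this is the whole ring.\<close>
inductive_set aug_pow :: "nat \<Rightarrow> 'v::group_add grouping set" for s :: nat where
  gen: "length xs = s \<Longrightarrow> set xs \<subseteq> aug_ideal \<Longrightarrow> prod_list xs \<in> aug_pow s"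
| zero: "0 \<in> aug_pow s"
| diff: "a \<in> aug_pow s \<Longrightarrow> b \<in> aug_pow s \<Longrightarrow> a - b \<in> aug_pow s"
| lmult: "a \<in> aug_pow s \<Longrightarrow> c * a \<in> aug_pow s"
| rmult: "a \<in> aug_pow s \<Longrightarrow> a * c \<in> aug_pow s"

definition additive_hom :: "('v grouping \<Rightarrow> 'w grouping) \<Rightarrow> bool" where
  "additive_hom h \<longleftrightarrow> (\<forall>a b. h (a + b) = h a + h b)"

definition r_strict :: "nat \<Rightarrow> ('v::group_add grouping \<Rightarrow> 'w::group_add grouping) \<Rightarrow> bool" where
  "r_strict r h \<longleftrightarrow> (\<forall>s\<le>r. h ` aug_pow s \<subseteq> aug_pow s)"

end

theory Submission
  imports Defs
begin

text \<open>The ideal \<open>\<Delta>(V)\<^sup>s\<close> is additively spanned by the monomials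
  \<open>e\<^sub>a (e\<^sub>v\<^sub>1 - 1) \<dots> (e\<^sub>v\<^sub>s - 1)\<close>, so it suffices to follow how far \<open>h\<close> raises the
  filtration on monomials.  Writing \<open>D\<^sub>v f (z) = f (z (e\<^sub>v - 1))\<close>, the pointwise product
  \<open>f \<cdot> g\<close> (defined on the basis) obeys the discrete Leibniz rule
  \<open>D\<^sub>v (f \<cdot> g) = D\<^sub>v f \<cdot> g + f \<cdot> D\<^sub>v g + D\<^sub>v f \<cdot> D\<^sub>v g\<close>.  If \<open>f\<close> raises the degree of
  monomials by \<open>k\<close> and \<open>g\<close> by \<open>l\<close>, then \<open>D\<^sub>v f\<close> raises it by \<open>k + 1\<close>, and induction on
  the length of a monomial shows that \<open>f \<cdot> g\<close> raises it by \<open>k + l\<close>, all degrees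
  being capped at \<open>r\<close>.\<close>

lemma basis_elt_add: "e a * e b = e (a + b)"
  by (simp add: basis_elt_def mult_single)

lemma basis_elt_zero: "e 0 = (1 :: 'v::monoid_add grouping)"
  by (simp add: basis_elt_def one_poly_mapping.abs_eq single.abs_eq)

lemma augmentation_eq_sum:
  "finite S \<Longrightarrow> Poly_Mapping.keys x \<subseteq> S \<Longrightarrow> augmentation x = (\<Sum>v\<in>S. Poly_Mapping.lookup x v)"
  unfolding augmentation_def by (rule sum.mono_neutral_left) (auto simp: in_keys_iff)

lemma augmentation_diff: "augmentation (x - y) = augmentation x - augmentation y"
proof -
  let ?S = "Poly_Mapping.keys x \<union> Poly_Mapping.keys y"
  have "Poly_Mapping.keys (x - y) \<subseteq> ?S" by (auto simp: in_keys_iff lookup_minus)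
  then show ?thesis
    using augmentation_eq_sum[of ?S] by (simp add: lookup_minus sum_subtractf)
qed

lemma augmentation_single: "augmentation (Poly_Mapping.single v k) = k"
  using augmentation_eq_sum[of "{v}" "Poly_Mapping.single v k"] by simp

lemma basis_elt_minus_one_in_aug_ideal: "e v - 1 \<in> (aug_ideal :: 'v::group_add grouping set)"
proof -
  have "e v - 1 = Poly_Mapping.single v (1::int) - Poly_Mapping.single 0 1"
    unfolding basis_elt_zero[symmetric] basis_elt_def ..
  moreover have "augmentation (Poly_Mapping.single v (1::int) - Poly_Mapping.single 0 1) = 0"
    by (simp only: augmentation_diff augmentation_single)
  ultimately show ?thesis
    unfolding aug_ideal_def by simp
qed

definition aug_monomial :: "'v::group_add \<Rightarrow> 'v list \<Rightarrow> 'v grouping" where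
  "aug_monomial a vs = e a * prod_list (map (\<lambda>v. e v - 1) vs)"

lemma aug_monomial_Nil: "aug_monomial a [] = e a"
  by (simp add: aug_monomial_def)

lemma aug_monomial_snoc: "aug_monomial a (vs @ [v]) = aug_monomial a vs * (e v - 1)"
  by (simp add: aug_monomial_def mult.assoc)

lemma basis_elt_minus_one_mult_basis_elt:
  "(e v - 1) * e b = e b * (e (- b + v + b) - 1 :: 'v::group_add grouping)"
proof -
  have "(e v - 1) * e b = e (v + b) - e b"
    by (simp only: left_diff_distrib basis_elt_add mult_1_left)
  also have "\<dots> = e (b + (- b + v + b)) - e b" by (simp add: add.assoc[symmetric])
  also have "\<dots> = e b * (e (- b + v + b) - 1)"
    by (simp only: right_diff_distrib basis_elt_add mult_1_right)
  finally show ?thesis .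
qed

lemma prod_list_mult_basis_elt:
  "prod_list (map (\<lambda>v. e v - 1) vs) * e (b::'v::group_add)
   = e b * prod_list (map (\<lambda>v. e v - 1) (map (\<lambda>v. - b + v + b) vs))"
proof (induction vs)
  case Nil then show ?case by simp
next
  case (Cons v vs)
  have "prod_list (map (\<lambda>v. e v - 1) (v # vs)) * e b
      = ((e v - 1) * e b) * prod_list (map (\<lambda>v. e v - 1) (map (\<lambda>v. - b + v + b) vs))"
    by (simp only: list.map prod_list.Cons mult.assoc Cons)
  then show ?case
    by (simp only: basis_elt_minus_one_mult_basis_elt mult.assoc list.map prod_list.Cons)
qed

lemma aug_monomial_mult:
  "aug_monomial a vs * aug_monomial b ws = aug_monomial (a + b) (map (\<lambda>v. - b + v + b) vs @ ws)"
proof -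
  have "aug_monomial a vs * e b = aug_monomial (a + b) (map (\<lambda>v. - b + v + b) vs)"
    unfolding aug_monomial_def
    by (simp add: mult.assoc prod_list_mult_basis_elt) (simp add: mult.assoc[symmetric] basis_elt_add)
  then show ?thesis
    by (simp add: aug_monomial_def mult.assoc[symmetric])
qed

lemma aug_monomial_in_aug_pow: "aug_monomial a vs \<in> aug_pow (length vs)"
  unfolding aug_monomial_def
  by (intro aug_pow.lmult aug_pow.gen) (auto intro: basis_elt_minus_one_in_aug_ideal)

lemma aug_pow_Suc_subset: "aug_pow (Suc s) \<subseteq> aug_pow s"
proof
  fix x assume "x \<in> aug_pow (Suc s)"
  then show "x \<in> aug_pow s"
  proof (induction x rule: aug_pow.induct)
    case (gen xs)
    then obtain ys y where "xs = ys @ [y]" "length ys = s"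
      unfolding length_Suc_conv_rev by blast
    with gen show ?case by (auto intro: aug_pow.rmult aug_pow.gen)
  qed (auto intro: aug_pow.intros)
qed

lemma aug_pow_antimono: "i \<le> j \<Longrightarrow> aug_pow j \<subseteq> aug_pow i"
  by (induction j rule: dec_induct) (use aug_pow_Suc_subset in blast)+

inductive_set aug_span :: "nat \<Rightarrow> 'v::group_add grouping set" for s :: nat where
  monomial: "length vs = s \<Longrightarrow> aug_monomial a vs \<in> aug_span s"
| zero: "0 \<in> aug_span s"
| diff: "x \<in> aug_span s \<Longrightarrow> y \<in> aug_span s \<Longrightarrow> x - y \<in> aug_span s"

lemma aug_span_add: "x \<in> aug_span s \<Longrightarrow> y \<in> aug_span s \<Longrightarrow> x + y \<in> aug_span s"
  using aug_span.diff[of x s "- y"] aug_span.diff[OF aug_span.zero, of y s] by simp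

lemma aug_span_mult: "x \<in> aug_span i \<Longrightarrow> y \<in> aug_span j \<Longrightarrow> x * y \<in> aug_span (i + j)"
proof (induction x rule: aug_span.induct)
  case (monomial vs a)
  from monomial.prems show ?case
  proof (induction y rule: aug_span.induct)
    case (monomial ws b)
    with \<open>length vs = i\<close> show ?case
      by (simp add: aug_monomial_mult aug_span.monomial)
  qed (auto simp: right_diff_distrib intro: aug_span.intros)
qed (auto simp: left_diff_distrib intro: aug_span.intros)

lemma aug_span_0: "x \<in> aug_span 0"
proof -
  have "Poly_Mapping.keys x \<subseteq> UNIV" by simp
  then show ?thesis
  proof (induction x rule: frag_induction)
    case (one u)
    then show ?case
      using aug_span.monomial[of "[]" 0 u] by (simp add: aug_monomial_Nil basis_elt_def)
  qed (auto intro: aug_span.intros)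
qed

lemma aug_ideal_subset_aug_span_1: "aug_ideal \<subseteq> aug_span 1"
proof
  fix x :: "'a grouping" assume x: "x \<in> aug_ideal"
  have "Poly_Mapping.keys x \<subseteq> UNIV" by simp
  then have "x - Poly_Mapping.single 0 (augmentation x) \<in> aug_span 1"
  proof (induction x rule: frag_induction)
    case zero
    then show ?case by (simp add: augmentation_def aug_span.zero)
  next
    case (one u)
    have "frag_of u - Poly_Mapping.single 0 (augmentation (frag_of u)) = e u - e 0"
      by (simp add: augmentation_single basis_elt_def)
    also have "\<dots> = aug_monomial 0 [u]"
      by (simp add: aug_monomial_def basis_elt_zero)
    finally show ?case by (simp add: aug_span.monomial)
  next
    case (diff a b)
    have eq: "a - b - Poly_Mapping.single 0 (augmentation (a - b))
      = (a - Poly_Mapping.single 0 (augmentation a)) - (b - Poly_Mapping.single 0 (augmentation b))"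
      by (simp add: augmentation_diff single_diff)
    from diff show ?case unfolding eq by (rule aug_span.diff)
  qed
  with x show "x \<in> aug_span 1" by (simp add: aug_ideal_def)
qed

lemma prod_list_in_aug_span: "set xs \<subseteq> aug_ideal \<Longrightarrow> prod_list xs \<in> aug_span (length xs)"
proof (induction xs)
  case Nil
  show ?case using aug_span.monomial[of "[]" 0 0] by (simp add: aug_monomial_Nil basis_elt_zero)
next
  case (Cons x xs)
  then have "x * prod_list xs \<in> aug_span (1 + length xs)"
    by (intro aug_span_mult) (use aug_ideal_subset_aug_span_1 in auto)
  then show ?case by simp
qed

lemma aug_pow_eq_aug_span: "aug_pow s = aug_span s"
proof
  show "aug_pow s \<subseteq> aug_span s"
  proof
    fix x assume "x \<in> aug_pow s"
    then show "x \<in> aug_span s"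
    proof (induction x rule: aug_pow.induct)
      case (lmult a c)
      then show ?case using aug_span_mult[OF aug_span_0] by fastforce
    next
      case (rmult a c)
      then show ?case using aug_span_mult[OF _ aug_span_0] by fastforce
    qed (auto intro: prod_list_in_aug_span aug_span.intros)
  qed
  show "aug_span s \<subseteq> aug_pow s"
  proof
    fix x assume "x \<in> aug_span s"
    then show "x \<in> aug_pow s"
      by induction (auto intro: aug_pow.intros aug_monomial_in_aug_pow)
  qed
qed

lemma aug_pow_mult: "x \<in> aug_pow i \<Longrightarrow> y \<in> aug_pow j \<Longrightarrow> x * y \<in> aug_pow (i + j)"
  by (simp add: aug_pow_eq_aug_span aug_span_mult)

lemma aug_pow_add: "x \<in> aug_pow s \<Longrightarrow> y \<in> aug_pow s \<Longrightarrow> x + y \<in> aug_pow s"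
  by (simp add: aug_pow_eq_aug_span aug_span_add)

lemma additive_hom_zero: "additive_hom h \<Longrightarrow> h 0 = 0"
  unfolding additive_hom_def by (metis add.right_neutral add_left_cancel)

lemma additive_hom_diff: "additive_hom h \<Longrightarrow> h (a - b) = h a - h b"
  unfolding additive_hom_def by (metis diff_add_cancel eq_diff_eq)

lemma additive_hom_eqI:
  assumes "additive_hom h1" "additive_hom h2" "\<And>u. h1 (e u) = h2 (e u)"
  shows "h1 x = h2 x"
proof -
  have "Poly_Mapping.keys x \<subseteq> UNIV" by simp
  then show ?thesis
  proof (induction x rule: frag_induction)
    case zero then show ?case by (simp add: additive_hom_zero assms(1,2))
  next
    case (one u) then show ?case using assms(3) by (simp add: basis_elt_def)
  next
    case (diff a b) then show ?case by (simp add: additive_hom_diff assms(1,2))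
  qed
qed

definition basis_product ::
  "('v grouping \<Rightarrow> 'w::monoid_add grouping) \<Rightarrow> ('v grouping \<Rightarrow> 'w grouping) \<Rightarrow> 'v grouping \<Rightarrow> 'w grouping"
  where "basis_product f g = frag_extend (\<lambda>u. f (e u) * g (e u))"

lemma additive_hom_basis_product: "additive_hom (basis_product f g)"
  unfolding additive_hom_def basis_product_def by (simp add: frag_extend_add)

lemma basis_product_basis_elt: "basis_product f g (e u) = f (e u) * g (e u)"
  unfolding basis_product_def by (simp add: basis_elt_def)

definition right_difference ::
  "'v::group_add \<Rightarrow> ('v grouping \<Rightarrow> 'w grouping) \<Rightarrow> 'v grouping \<Rightarrow> 'w grouping"
  where "right_difference v f z = f (z * (e v - 1))"

lemma additive_hom_right_difference:
  "additive_hom f \<Longrightarrow> additive_hom (right_difference v f)"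
  unfolding additive_hom_def right_difference_def by (simp add: distrib_right)

lemma basis_product_leibniz:
  fixes f g :: "'v::group_add grouping \<Rightarrow> 'w::group_add grouping"
  assumes f: "additive_hom f" and g: "additive_hom g"
  shows "basis_product f g (z * (e v - 1))
    = basis_product (right_difference v f) g z + basis_product f (right_difference v g) z
      + basis_product (right_difference v f) (right_difference v g) z"
proof (rule additive_hom_eqI[where x = z])
  show "additive_hom (\<lambda>z. basis_product f g (z * (e v - 1)))"
    unfolding additive_hom_def by (simp add: distrib_right additive_hom_basis_product[unfolded additive_hom_def])
  show "additive_hom (\<lambda>z. basis_product (right_difference v f) g z
      + basis_product f (right_difference v g) z
      + basis_product (right_difference v f) (right_difference v g) z)"
    unfolding additive_hom_def by (simp add: algebra_simps additive_hom_basis_product[unfolded additive_hom_def])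
  fix u
  have "f (e u * e v) = f (e u) + right_difference v f (e u)"
    "g (e u * e v) = g (e u) + right_difference v g (e u)"
    unfolding right_difference_def
    by (simp_all add: right_diff_distrib additive_hom_diff[OF f] additive_hom_diff[OF g])
  moreover have "basis_product f g (e u * e v) = f (e u * e v) * g (e u * e v)"
    by (simp only: basis_elt_add basis_product_basis_elt)
  ultimately show "basis_product f g (e u * (e v - 1))
      = basis_product (right_difference v f) g (e u) + basis_product f (right_difference v g) (e u)
        + basis_product (right_difference v f) (right_difference v g) (e u)"
    by (simp add: right_diff_distrib additive_hom_diff[OF additive_hom_basis_product]
        basis_product_basis_elt algebra_simps)
qed

definition raises_degree :: "nat \<Rightarrow> nat \<Rightarrow> ('v::group_add grouping \<Rightarrow> 'w::group_add grouping) \<Rightarrow> bool"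
  where "raises_degree r k f \<longleftrightarrow> (\<forall>a vs. f (aug_monomial a vs) \<in> aug_pow (min r (k + length vs)))"

lemma raises_degree_right_difference:
  fixes f :: "'v::group_add grouping \<Rightarrow> 'w::group_add grouping"
  assumes "raises_degree r k f"
  shows "raises_degree r (Suc k) (right_difference v f)"
  unfolding raises_degree_def right_difference_def
proof (intro allI)
  fix a :: 'v and vs
  have "f (aug_monomial a (vs @ [v])) \<in> aug_pow (min r (k + length (vs @ [v])))"
    using assms unfolding raises_degree_def by blast
  then show "f (aug_monomial a vs * (e v - 1)) \<in> aug_pow (min r (Suc k + length vs))"
    by (simp add: aug_monomial_snoc)
qed

lemma r_strict_imp_raises_degree:
  fixes f :: "'v::group_add grouping \<Rightarrow> 'w::group_add grouping"
  assumes "r_strict r f"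
  shows "raises_degree r 0 f"
  unfolding raises_degree_def
proof (intro allI)
  fix a :: 'v and vs
  have "aug_monomial a vs \<in> aug_pow (min r (length vs))"
    using aug_monomial_in_aug_pow aug_pow_antimono[of "min r (length vs)" "length vs"] by auto
  moreover have "f ` aug_pow (min r (length vs)) \<subseteq> aug_pow (min r (length vs))"
    using assms unfolding r_strict_def by simp
  ultimately show "f (aug_monomial a vs) \<in> aug_pow (min r (0 + length vs))"
    by auto
qed

lemma raises_degree_imp_r_strict:
  fixes h :: "'v::group_add grouping \<Rightarrow> 'w::group_add grouping"
  assumes h: "additive_hom h" and "raises_degree r 0 h"
  shows "r_strict r h"
  unfolding r_strict_def aug_pow_eq_aug_span
proof (intro allI impI image_subsetI)
  fix s and x :: "'v grouping" assume "s \<le> r" and "x \<in> aug_span s"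
  from \<open>x \<in> aug_span s\<close> show "h x \<in> aug_span s"
  proof (induction x rule: aug_span.induct)
    case (monomial vs a)
    with assms(2) \<open>s \<le> r\<close> show ?case
      unfolding raises_degree_def aug_pow_eq_aug_span by (metis add_0 min.absorb2)
  qed (auto simp: additive_hom_zero[OF h] additive_hom_diff[OF h] intro: aug_span.intros)
qed

lemma raises_degree_basis_product:
  fixes f g :: "'v::group_add grouping \<Rightarrow> 'w::group_add grouping"
  assumes "additive_hom f" "additive_hom g" "raises_degree r k f" "raises_degree r l g"
  shows "raises_degree r (k + l) (basis_product f g)"
  unfolding raises_degree_def
proof (intro allI)
  fix a and vs :: "'v list"
  from assms show "basis_product f g (aug_monomial a vs) \<in> aug_pow (min r (k + l + length vs))"
  proof (induction vs arbitrary: f g k l rule: rev_induct)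
    case Nil
    have "f (e a) \<in> aug_pow (min r k)" "g (e a) \<in> aug_pow (min r l)"
      using Nil.prems(3,4) unfolding raises_degree_def
      by (metis aug_monomial_Nil add_0_right list.size(3))+
    then have "f (e a) * g (e a) \<in> aug_pow (min r k + min r l)"
      by (rule aug_pow_mult)
    moreover have "aug_pow (min r k + min r l) \<subseteq> aug_pow (min r (k + l))"
      by (rule aug_pow_antimono) simp
    ultimately show ?case
      by (auto simp: aug_monomial_Nil basis_product_basis_elt)
  next
    case (snoc v vs)
    let ?Df = "right_difference v f" and ?Dg = "right_difference v g"
    have Df: "additive_hom ?Df" "raises_degree r (Suc k) ?Df"
      and Dg: "additive_hom ?Dg" "raises_degree r (Suc l) ?Dg"
      using snoc.prems by (simp_all add: additive_hom_right_difference raises_degree_right_difference)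
    have "basis_product ?Df ?Dg (aug_monomial a vs) \<in> aug_pow (min r (Suc k + Suc l + length vs))"
      using snoc.IH[OF Df(1) Dg(1) Df(2) Dg(2)] .
    then have "basis_product ?Df ?Dg (aug_monomial a vs) \<in> aug_pow (min r (k + l + length (vs @ [v])))"
      by (rule subsetD[OF aug_pow_antimono, rotated]) (rule min.mono, simp_all)
    moreover have "basis_product ?Df g (aug_monomial a vs) \<in> aug_pow (min r (k + l + length (vs @ [v])))"
      "basis_product f ?Dg (aug_monomial a vs) \<in> aug_pow (min r (k + l + length (vs @ [v])))"
      using snoc.IH[OF Df(1) snoc.prems(2) Df(2) snoc.prems(4)]
        snoc.IH[OF snoc.prems(1) Dg(1) snoc.prems(3) Dg(2)] by simp_all
    moreover have "basis_product f g (aug_monomial a (vs @ [v]))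
      = basis_product ?Df g (aug_monomial a vs) + basis_product f ?Dg (aug_monomial a vs)
        + basis_product ?Df ?Dg (aug_monomial a vs)"
      by (simp only: aug_monomial_snoc basis_product_leibniz[OF snoc.prems(1,2)])
    ultimately show ?case
      by (simp only:) (intro aug_pow_add)
  qed
qed

theorem mainTheorem7:
  fixes f g h :: "'v::group_add grouping \<Rightarrow> 'w::group_add grouping" and r :: nat
  assumes "additive_hom f" and "r_strict r f"
    and "additive_hom g" and "r_strict r g"
    and "additive_hom h"
    and "\<And>v. h (e v) = f (e v) * g (e v)"
  shows "r_strict r h"
proof -
  have "h = basis_product f g"
    using additive_hom_eqI[OF assms(5) additive_hom_basis_product]
    by (auto simp: assms(6) basis_product_basis_elt)
  moreover have "raises_degree r (0 + 0) (basis_product f g)"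
    using assms(1-4) by (intro raises_degree_basis_product r_strict_imp_raises_degree)
  ultimately show ?thesis
    using raises_degree_imp_r_strict assms(5) by simp
qed

end
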